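(* Fix $H\in(\tfrac12,1)$, $\sigma>0$ and a continuous function $a:[0,1]\to\mathbb{R}$, and let $\mathcal{A}_n^{(N,H)}$, $\mathcal{A}^{(N,H)}$ be the sets of arbitrage points defined in the context. For all integers $k\geq 2$ and every $x\in\{-1,1\}^{k-1}$ there exist integers $n_k(x)\geq 1$ and $N_k(x)\geq k+n_k(x)$ such that for all $N\geq N_k(x)$: $$\left(x,1_{n_k(x)}\right)\in\mathcal{A}_{k+n_k(x)}^{(N,H)}\quad\text{and}\quad\left(x,-1_{n_k(x)}\right)\in\mathcal{A}_{k+n_k(x)}^{(N,H)},$$ where $1_m=(1,\dots,1)\in\mathbb{R}^m$ and $-1_m=(-1,\dots,-1)\in\mathbb{R}^m$. In particular $\lim_{N\to\infty}|\mathcal{A}^{(N,H)}|=\infty$.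
   Context: Let $c_H=\sqrt{\frac{2H\,\Gamma(\frac32-H)}{\Gamma(H+\frac12)\Gamma(2-2H)}}$, $C_H=c_H(H-\frac12)$ and $k_H(t,s)=C_H\, s^{\frac12-H}\int_s^t u^{H-\frac12}(u-s)^{H-\frac32}\,du$. For integers $N>1$, $1\le i<n\le N$, set $J_n^{(N,H)}(i)=\sigma\sqrt N\int_{(i-1)/N}^{i/N}\big(k_H(\tfrac nN,u)-k_H(\tfrac{n-1}N,u)\big)du$, and for $1\le n\le N$ set $g_n^{(N,H)}=\sigma\sqrt N\int_{(n-1)/N}^{n/N}k_H(\tfrac nN,u)\,du$ and $a_n^{(N)}=\frac1N a(n/N)$. For $x=(x_1,\dots,x_{n-1})\in\{-1,1\}^{n-1}$ let $Y_n^{(N,H)}(x)=\sum_{i=1}^{n-1}J_n^{(N,H)}(i)x_i$ (with $Y_1^{(N,H)}=0$), $u_n^{(N)}(x)=Y_n^{(N,H)}(x)+g_n^{(N,H)}$, $d_n^{(N)}(x)=Y_n^{(N,H)}(x)-g_n^{(N,H)}$. The $N$-binary tree is $\mathbb{X}_N=\{\tau\}\cup\bigcup_{n=1}^{N-1}\{-1,1\}^n$ ($\tau$ the root, identified with the empty sequence). The set of arbitrage points at level $n\ge2$ is $\mathcal{A}_n^{(N,H)}=\{x\in\{-1,1\}^{n-1}: u_n^{(N)}(x)\le -a_n^{(N)}\text{ or } d_n^{(N)}(x)\ge -a_n^{(N)}\}$; $\mathcal{A}_1^{(N,H)}=\{\tau\}$ if $u_1^{(N)}\le -a_1^{(N)}$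 or $d_1^{(N)}\ge -a_1^{(N)}$, and $\emptyset$ otherwise. The set of arbitrage points is $\mathcal{A}^{(N,H)}=\bigcup_{n=1}^N\mathcal{A}_n^{(N,H)}\subseteq\mathbb{X}_N$. *)

theory Defs
  imports "HOL-Analysis.Analysis"
begin

definition cH :: "real \<Rightarrow> real" where
  "cH H = sqrt (2 * H * Gamma (3/2 - H) / (Gamma (H + 1/2) * Gamma (2 - 2 * H)))"

definition CH :: "real \<Rightarrow> real" where
  "CH H = cH H * (H - 1/2)"

definition kH :: "real \<Rightarrow> real \<Rightarrow> real \<Rightarrow> real" where
  "kH H t s = CH H * s powr (1/2 - H) *
     integral {s..t} (\<lambda>u. u powr (H - 1/2) * (u - s) powr (H - 3/2))"

definition Jn :: "real \<Rightarrow> real \<Rightarrow> nat \<Rightarrow> nat \<Rightarrow> nat \<Rightarrow> real" where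
  "Jn \<sigma> H N n i = \<sigma> * sqrt (real N) *
     integral {(real i - 1) / real N .. real i / real N}
       (\<lambda>u. kH H (real n / real N) u - kH H ((real n - 1) / real N) u)"

definition gn :: "real \<Rightarrow> real \<Rightarrow> nat \<Rightarrow> nat \<Rightarrow> real" where
  "gn \<sigma> H N n = \<sigma> * sqrt (real N) *
     integral {(real n - 1) / real N .. real n / real N} (\<lambda>u. kH H (real n / real N) u)"

definition an :: "(real \<Rightarrow> real) \<Rightarrow> nat \<Rightarrow> nat \<Rightarrow> real" where
  "an a N n = a (real n / real N) / real N"

text \<open>Points of the binary tree are lists; x_i is x ! (i-1).\<close>
definition Yn :: "real \<Rightarrow> real \<Rightarrow> nat \<Rightarrow> nat \<Rightarrow> real list \<Rightarrow> real" where
  "Yn \<sigma> H N n x = (\<Sum>i = 1..n - 1. Jn \<sigma> H N n i * x ! (i - 1))"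

definition un :: "real \<Rightarrow> real \<Rightarrow> nat \<Rightarrow> nat \<Rightarrow> real list \<Rightarrow> real" where
  "un \<sigma> H N n x = Yn \<sigma> H N n x + gn \<sigma> H N n"

definition dn :: "real \<Rightarrow> real \<Rightarrow> nat \<Rightarrow> nat \<Rightarrow> real list \<Rightarrow> real" where
  "dn \<sigma> H N n x = Yn \<sigma> H N n x - gn \<sigma> H N n"

definition pm_seqs :: "nat \<Rightarrow> real list set" where
  "pm_seqs m = {x. length x = m \<and> set x \<subseteq> {-1, 1}}"

text \<open>Arbitrage points at level n (n >= 1); level 1 gives {[]} (the root) or {}.\<close>
definition arb_level :: "real \<Rightarrow> real \<Rightarrow> (real \<Rightarrow> real) \<Rightarrow> nat \<Rightarrow> nat \<Rightarrow> real list set" where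
  "arb_level \<sigma> H a N n = {x \<in> pm_seqs (n - 1).
       un \<sigma> H N n x \<le> - an a N n \<or> dn \<sigma> H N n x \<ge> - an a N n}"

definition arb_set :: "real \<Rightarrow> real \<Rightarrow> (real \<Rightarrow> real) \<Rightarrow> nat \<Rightarrow> real list set" where
  "arb_set \<sigma> H a N = (\<Union>n\<in>{1..N}. arb_level \<sigma> H a N n)"

end

theory Submission
  imports Defs "HOL-Real_Asymp.Real_Asymp"
begin

text \<open>
  Substituting u = v/N shows that the kernel is self-similar, k_H(t/N, s/N) = N^(1/2-H) k_H(t, s),
  so J_n^(N,H)(i) = sigma N^(-H) J_n^(1,H)(i) and g_n^(N,H) = sigma N^(-H) g_n^(1,H), while
  |a_n^(N)| <= max |a| / N is eventually smaller than sigma N^(-H) because H < 1.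
  For a fixed prefix x of length k - 1, the weights J_n^(1,H)(i), i < k, are bounded uniformly in
  n >= 2k and g_n^(1,H) is bounded, whereas the weights of the later positions decay only like
  (n - i)^(H - 3/2), so their sum diverges. After appending a long enough run of 1's (resp. -1's) the
  appended part therefore dominates: d_n >= -a_n (resp. u_n <= -a_n) for all large N. Extending the
  prefixes (1, ..., 1, -1) of different lengths gives distinct arbitrage points, so the number of
  arbitrage points tends to infinity.
\<close>

text \<open>Non-integrable functions have integral 0, so no integrability hypothesis on f is needed.\<close>

lemma integral_nonneg_any:
  fixes f :: "real \<Rightarrow> real"
  assumes "\<And>x. x \<in> S \<Longrightarrow> 0 \<le> f x"
  shows "0 \<le> integral S f"
  by (cases "f integrable_on S") (auto intro!: integral_nonneg assms simp: not_integrable_integral)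

lemma integral_le_integrable_majorant:
  fixes f g :: "real \<Rightarrow> real"
  assumes "\<And>x. x \<in> S \<Longrightarrow> 0 \<le> f x" "\<And>x. x \<in> S \<Longrightarrow> f x \<le> g x" "g integrable_on S"
  shows "integral S f \<le> integral S g"
proof (cases "f integrable_on S")
  case True
  then show ?thesis using assms by (intro integral_le) auto
next
  case False
  have "0 \<le> integral S g" using assms by (intro integral_nonneg) (auto intro: order_trans)
  then show ?thesis using False by (simp add: not_integrable_integral)
qed

lemma integral_stretch_interval:
  fixes f :: "real \<Rightarrow> real"
  assumes "c > 0"
  shows "integral {a/c..b/c} f = integral {a..b} (\<lambda>v. f (v/c)) / c"
proof -
  have "(\<lambda>x. x / c) ` {a..b} = {a/c..b/c}" using assms by simp
  moreover have "integral ((\<lambda>x. x / c) ` {a..b}) (\<lambda>x. f (c * x / c)) =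
      (1 / \<bar>c\<bar>) *\<^sub>R integral {a..b} (\<lambda>v. f (v/c))"
    using assms by (intro integral_stretch_real) auto
  ultimately show ?thesis using assms by simp
qed

lemma has_integral_powr_shifted:
  fixes s t b :: real
  assumes "s \<le> t" "b > -1"
  shows "((\<lambda>u. (u - s) powr b) has_integral ((t - s) powr (b + 1) / (b + 1))) {s..t}"
proof -
  have "((\<lambda>x. x powr b) has_integral ((t - s) powr (b + 1) / (b + 1))) {0..t - s}"
    using assms by (intro has_integral_powr_from_0) auto
  then have "(((\<lambda>u. (u - s) powr b) \<circ> (+) s) has_integral ((t - s) powr (b + 1) / (b + 1))) {0..t - s}"
    by (simp add: o_def)
  then show ?thesis
    using has_integral_shift_Icc_real[of "\<lambda>u. (u - s) powr b" s _ 0 "t - s"] by simp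
qed

lemma CH_pos:
  assumes "1/2 < H" "H < 1"
  shows "CH H > 0"
proof -
  have "Gamma (3/2 - H) > 0" "Gamma (H + 1/2) > 0" "Gamma (2 - 2*H) > 0"
    using assms by auto
  then have "cH H > 0" unfolding cH_def using assms by (auto intro!: divide_pos_pos mult_pos_pos)
  then show ?thesis unfolding CH_def using assms by simp
qed

lemma kH_scale:
  assumes N: "N > 0" and s: "s \<ge> 0"
  shows "kH H (t/N) (s/N) = N powr (1/2 - H) * kH H t s"
proof -
  let ?F = "\<lambda>r u. u powr (H - 1/2) * (u - r) powr (H - 3/2)"
  have "integral {s/N..t/N} (?F (s/N)) = integral {s..t} (\<lambda>v. ?F (s/N) (v/N)) / N"
    using N by (rule integral_stretch_interval)
  also have "integral {s..t} (\<lambda>v. ?F (s/N) (v/N)) =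
      integral {s..t} (\<lambda>v. ?F s v / (N powr (H - 1/2) * N powr (H - 3/2)))"
    using N s by (intro integral_cong) (simp add: powr_divide diff_divide_distrib[symmetric])
  finally have I: "integral {s/N..t/N} (?F (s/N)) =
      integral {s..t} (?F s) / (N powr (H - 1/2) * N powr (H - 3/2) * N)"
    by simp
  have "N powr (H - 1/2) * N powr (H - 3/2) * N powr 1 * N powr (1/2 - H) * N powr (1/2 - H) = 1"
    using N by (simp only: powr_add[symmetric]) (simp add: algebra_simps)
  then show ?thesis
    unfolding kH_def I using N s by (simp add: powr_divide field_simps)
qed

lemma kH_at_0 [simp]: "kH H t 0 = 0"
  by (simp add: kH_def)

lemma kH_nonneg:
  assumes "1/2 < H" "H < 1"
  shows "0 \<le> kH H t s"
  unfolding kH_def using CH_pos[OF assms] by (intro mult_nonneg_nonneg integral_nonneg_any) auto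

lemma kH_integrand_integrable:
  fixes s t :: real
  assumes H: "1/2 < H" and s: "0 < s" "s \<le> t"
  shows "(\<lambda>u. u powr (H - 1/2) * (u - s) powr (H - 3/2)) integrable_on {s..t}"
proof -
  have "(\<lambda>u. (u - s) powr (H - 3/2)) integrable_on {s..t}"
    using has_integral_powr_shifted[of s t "H - 3/2"] s H by (auto simp: integrable_on_def)
  then have "(\<lambda>u. (u - s) powr (H - 3/2)) absolutely_integrable_on {s..t}"
    by (intro nonnegative_absolutely_integrable_1) auto
  moreover have "continuous_on {s..t} (\<lambda>u. u powr (H - 1/2))"
    using s by (intro continuous_intros) auto
  ultimately have "(\<lambda>u. u powr (H - 1/2) * (u - s) powr (H - 3/2)) absolutely_integrable_on {s..t}"
    by (intro absolutely_integrable_bounded_measurable_product_real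
          continuous_imp_measurable_on_sets_lebesgue compact_imp_bounded compact_continuous_image) auto
  then show ?thesis
    using absolutely_integrable_on_def by blast
qed

lemma kH_le:
  assumes H: "1/2 < H" "H < 1" and s: "0 \<le> s" "s \<le> t"
  shows "kH H t s \<le> CH H * s powr (1/2 - H) * t powr (H - 1/2) * (t - s) powr (H - 1/2) / (H - 1/2)"
proof -
  have majorant: "((\<lambda>u. t powr (H - 1/2) * (u - s) powr (H - 3/2)) has_integral
      t powr (H - 1/2) * ((t - s) powr (H - 1/2) / (H - 1/2))) {s..t}"
    using has_integral_mult_right[OF has_integral_powr_shifted[of s t "H - 3/2"]] s H by simp
  have "integral {s..t} (\<lambda>u. u powr (H - 1/2) * (u - s) powr (H - 3/2))
      \<le> integral {s..t} (\<lambda>u. t powr (H - 1/2) * (u - s) powr (H - 3/2))"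
    using s H majorant by (intro integral_le_integrable_majorant mult_right_mono powr_mono2)
      (auto simp: has_integral_integrable)
  also have "\<dots> = t powr (H - 1/2) * ((t - s) powr (H - 1/2) / (H - 1/2))"
    using majorant by (rule integral_unique)
  finally have "CH H * s powr (1/2 - H) * integral {s..t} (\<lambda>u. u powr (H - 1/2) * (u - s) powr (H - 3/2))
      \<le> CH H * s powr (1/2 - H) * (t powr (H - 1/2) * ((t - s) powr (H - 1/2) / (H - 1/2)))"
    using CH_pos[OF H] by (intro mult_left_mono) auto
  then show ?thesis
    unfolding kH_def by simp
qed

lemma kH_diff_eq:
  assumes H: "1/2 < H" and v: "0 < v" "v \<le> t - 1"
  shows "kH H t v - kH H (t - 1) v = CH H * v powr (1/2 - H) *
           integral {t - 1..t} (\<lambda>u. u powr (H - 1/2) * (u - v) powr (H - 3/2))"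
proof -
  have combine: "integral {v..t - 1} (\<lambda>u. u powr (H - 1/2) * (u - v) powr (H - 3/2)) +
        integral {t - 1..t} (\<lambda>u. u powr (H - 1/2) * (u - v) powr (H - 3/2)) =
        integral {v..t} (\<lambda>u. u powr (H - 1/2) * (u - v) powr (H - 3/2))"
    using v by (intro Henstock_Kurzweil_Integration.integral_combine kH_integrand_integrable H) auto
  then show ?thesis
    unfolding kH_def by (simp add: algebra_simps flip: combine)
qed

lemma kH_diff_nonneg:
  assumes H: "1/2 < H" "H < 1" and v: "0 \<le> v" "v \<le> t - 1"
  shows "0 \<le> kH H t v - kH H (t - 1) v"
proof (cases "v = 0")
  case False
  then show ?thesis
    using kH_diff_eq[OF H(1), of v t] v CH_pos[OF H]
    by (auto intro!: mult_nonneg_nonneg integral_nonneg_any)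
qed simp

lemma kH_diff_le:
  assumes H: "1/2 < H" "H < 1" and v: "0 < v" "2 * (v + 1) \<le> t"
  shows "kH H t v - kH H (t - 1) v \<le> 2 * CH H * v powr (1/2 - H)"
proof -
  have t: "t \<ge> 1" using v by simp
  have "integral {t - 1..t} (\<lambda>u. u powr (H - 1/2) * (u - v) powr (H - 3/2))
      \<le> integral {t - 1..t} (\<lambda>u. t powr (H - 1/2) * (t/2) powr (H - 3/2))"
  proof (rule integral_le_integrable_majorant)
    fix u assume u: "u \<in> {t - 1..t}"
    show "u powr (H - 1/2) * (u - v) powr (H - 3/2) \<le> t powr (H - 1/2) * (t/2) powr (H - 3/2)"
      using u v H by (intro mult_mono powr_mono2 powr_mono2') auto
  qed auto
  also have "\<dots> = t powr ((H - 1/2) + (H - 3/2)) * 2 powr (3/2 - H)"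
    using t powr_divide[of t 2 "H - 3/2"] powr_add[of t "H - 1/2" "H - 3/2"]
      powr_minus_divide[of 2 "H - 3/2"] by simp
  also have "\<dots> \<le> 1 * 2"
  proof (rule mult_mono)
    show "t powr ((H - 1/2) + (H - 3/2)) \<le> 1"
      using t H powr_mono[of "(H - 1/2) + (H - 3/2)" 0 t] by simp
    show "2 powr (3/2 - H) \<le> 2"
      using H powr_mono[of "3/2 - H" 1 2] by simp
  qed auto
  finally have "integral {t - 1..t} (\<lambda>u. u powr (H - 1/2) * (u - v) powr (H - 3/2)) \<le> 2"
    using t by simp
  then show ?thesis
    using kH_diff_eq[OF H(1), of v t] v CH_pos[OF H] by (simp add: mult_left_mono)
qed

text \<open>Strictness of v < t - 1 matters: at u = v the integrand takes the value 0 powr (H - 3/2) = 0.\<close>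

lemma kH_diff_ge:
  assumes H: "1/2 < H" "H < 1" and v: "0 < v" "v < t - 1"
  shows "CH H * (t - v) powr (H - 3/2) \<le> kH H t v - kH H (t - 1) v"
proof -
  have "integral {t - 1..t} (\<lambda>u. (t - 1) powr (H - 1/2) * (t - v) powr (H - 3/2))
      \<le> integral {t - 1..t} (\<lambda>u. u powr (H - 1/2) * (u - v) powr (H - 3/2))"
  proof (rule integral_le)
    show "(\<lambda>u. u powr (H - 1/2) * (u - v) powr (H - 3/2)) integrable_on {t - 1..t}"
      using v by (intro integrable_on_subinterval[OF kH_integrand_integrable[OF H(1), of v t]]) auto
    fix u assume u: "u \<in> {t - 1..t}"
    show "(t - 1) powr (H - 1/2) * (t - v) powr (H - 3/2) \<le> u powr (H - 1/2) * (u - v) powr (H - 3/2)"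
      using u v H by (intro mult_mono powr_mono2 powr_mono2') auto
  qed auto
  then have int: "(t - 1) powr (H - 1/2) * (t - v) powr (H - 3/2)
      \<le> integral {t - 1..t} (\<lambda>u. u powr (H - 1/2) * (u - v) powr (H - 3/2))"
    by simp
  have "1 \<le> ((t - 1) / v) powr (H - 1/2)"
    using v H by (intro ge_one_powr_ge_zero) auto
  then have "1 \<le> v powr (1/2 - H) * (t - 1) powr (H - 1/2)"
    using v by (simp add: powr_divide powr_minus_divide[of v "H - 1/2", simplified])
  then have "(t - v) powr (H - 3/2) \<le> v powr (1/2 - H) * (t - 1) powr (H - 1/2) * (t - v) powr (H - 3/2)"
    using mult_right_mono[of 1 _ "(t - v) powr (H - 3/2)"] by simp
  then have "CH H * (t - v) powr (H - 3/2)
      \<le> CH H * (v powr (1/2 - H) * (t - 1) powr (H - 1/2) * (t - v) powr (H - 3/2))"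
    using CH_pos[OF H] by (intro mult_left_mono) auto
  also have "\<dots> = CH H * v powr (1/2 - H) * ((t - 1) powr (H - 1/2) * (t - v) powr (H - 3/2))"
    by (simp add: mult_ac)
  also have "\<dots> \<le> kH H t v - kH H (t - 1) v"
    using kH_diff_eq[OF H(1), of v t] v int CH_pos[OF H] by (simp add: mult_left_mono)
  finally show ?thesis .
qed

lemma kH_diff_integrable:
  assumes H: "1/2 < H" "H < 1" and lo: "0 < lo" "hi < t - 1"
  shows "(\<lambda>v. kH H t v - kH H (t - 1) v) integrable_on {lo..hi}"
proof (rule integrable_eq)
  let ?F = "\<lambda>v u. u powr (H - 1/2) * (u - v) powr (H - 3/2)"
  have "continuous_on ({lo..hi} \<times> cbox (t - 1) t) (\<lambda>p. ?F (fst p) (snd p))"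
    using lo by (intro continuous_intros) (auto simp: mem_Times_iff)
  then have "continuous_on {lo..hi} (\<lambda>v. integral {t - 1..t} (?F v))"
    using integral_continuous_on_param[of "{lo..hi}" "t - 1" t ?F] by (simp add: case_prod_beta)
  then have "continuous_on {lo..hi} (\<lambda>v. CH H * v powr (1/2 - H) * integral {t - 1..t} (?F v))"
    using lo by (intro continuous_intros) auto
  then show "(\<lambda>v. CH H * v powr (1/2 - H) * integral {t - 1..t} (?F v)) integrable_on {lo..hi}"
    by (rule integrable_continuous_interval)
  show "CH H * v powr (1/2 - H) * integral {t - 1..t} (?F v) = kH H t v - kH H (t - 1) v"
    if "v \<in> {lo..hi}" for v
    using that lo by (intro kH_diff_eq[OF H(1), symmetric]) auto
qed

lemma integral_kernel_rescale:
  fixes f g :: "real \<Rightarrow> real"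
  assumes N: "N > 0" and fg: "\<And>v. v \<in> {lo..hi} \<Longrightarrow> f (v / N) = N powr (1/2 - H) * g v"
  shows "sqrt N * integral {lo/N..hi/N} f = N powr (-H) * integral {lo..hi} g"
proof -
  have "integral {lo..hi} (\<lambda>v. f (v / N)) = integral {lo..hi} (\<lambda>v. N powr (1/2 - H) * g v)"
    using fg by (rule integral_cong)
  then have "sqrt N * integral {lo/N..hi/N} f = sqrt N * N powr (1/2 - H) / N * integral {lo..hi} g"
    using integral_stretch_interval[OF N, of lo hi f] by simp
  also have "sqrt N * N powr (1/2 - H) / N = N powr (1/2) * N powr (1/2 - H) / N powr 1"
    using N by (simp add: powr_half_sqrt)
  also have "\<dots> = N powr (-H)"
    using N by (simp only: powr_add[symmetric] powr_diff[symmetric]) (simp add: algebra_simps)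
  finally show ?thesis .
qed

lemma Jn_1_eq_integral: "Jn 1 H 1 n i = integral {real i - 1..real i} (\<lambda>v. kH H (real n) v - kH H (real n - 1) v)"
  by (simp add: Jn_def)

lemma gn_1_eq_integral: "gn 1 H 1 n = integral {real n - 1..real n} (kH H (real n))"
  by (simp add: gn_def)

lemma Jn_scale:
  assumes "N > 0" "i \<ge> 1"
  shows "Jn \<sigma> H N n i = \<sigma> * real N powr (-H) * Jn 1 H 1 n i"
proof -
  have "sqrt (real N) * integral {(real i - 1) / real N..real i / real N}
      (\<lambda>u. kH H (real n / real N) u - kH H ((real n - 1) / real N) u)
    = real N powr (-H) * Jn 1 H 1 n i"
    unfolding Jn_1_eq_integral using assms by (intro integral_kernel_rescale) (auto simp: kH_scale right_diff_distrib)
  then show ?thesis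
    by (simp add: Jn_def mult.assoc)
qed

lemma gn_scale:
  assumes "N > 0" "n \<ge> 1"
  shows "gn \<sigma> H N n = \<sigma> * real N powr (-H) * gn 1 H 1 n"
proof -
  have "sqrt (real N) * integral {(real n - 1) / real N..real n / real N} (kH H (real n / real N))
    = real N powr (-H) * gn 1 H 1 n"
    unfolding gn_1_eq_integral using assms by (intro integral_kernel_rescale) (auto simp: kH_scale)
  then show ?thesis
    by (simp add: gn_def mult.assoc)
qed

lemma Jn_1_nonneg:
  assumes "1/2 < H" "H < 1" "1 \<le> i" "i < n"
  shows "0 \<le> Jn 1 H 1 n i"
  unfolding Jn_1_eq_integral using assms by (intro integral_nonneg_any kH_diff_nonneg) auto

lemma Jn_1_head_sum_bounded:
  assumes H: "1/2 < H" "H < 1"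
  shows "\<exists>B. \<forall>n \<ge> 2 * k. (\<Sum>i=1..k-1. Jn 1 H 1 n i) \<le> B"
proof -
  let ?bound = "\<lambda>i. integral {real i - 1..real i} (\<lambda>v. 2 * CH H * v powr (1/2 - H))"
  have "Jn 1 H 1 n i \<le> ?bound i" if n: "2 * k \<le> n" and i: "i \<in> {1..k-1}" for n i
  proof -
    have "(\<lambda>v. v powr (1/2 - H)) integrable_on {0..real i}"
      using H by (intro integrable_on_powr_from_0) auto
    then have "(\<lambda>v. v powr (1/2 - H)) integrable_on {real i - 1..real i}"
      by (rule integrable_on_subinterval) (use i in auto)
    then have "(\<lambda>v. 2 * CH H * v powr (1/2 - H)) integrable_on {real i - 1..real i}"
      by (rule integrable_on_mult_right)
    moreover have "kH H (real n) v - kH H (real n - 1) v \<le> 2 * CH H * v powr (1/2 - H)"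
      if "v \<in> {real i - 1..real i}" for v
    proof (cases "v = 0")
      case False
      then show ?thesis
        using that i n by (intro kH_diff_le H) auto
    qed simp
    ultimately show ?thesis
      unfolding Jn_1_eq_integral using i n by (intro integral_le_integrable_majorant kH_diff_nonneg H) auto
  qed
  then show ?thesis
    by (intro exI[of _ "\<Sum>i=1..k-1. ?bound i"] allI impI sum_mono)
qed

lemma Jn_1_ge:
  assumes H: "1/2 < H" "H < 1" and i: "2 \<le> i" "i + 2 \<le> n"
  shows "CH H * (real n - real i + 1) powr (H - 3/2) \<le> Jn 1 H 1 n i"
proof -
  have "CH H * (real n - real i + 1) powr (H - 3/2) \<le> kH H (real n) v - kH H (real n - 1) v"
    if "v \<in> {real i - 1..real i}" for v
  proof -
    have "CH H * (real n - real i + 1) powr (H - 3/2) \<le> CH H * (real n - v) powr (H - 3/2)"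
      using that i H CH_pos[OF H] by (intro mult_left_mono powr_mono2') auto
    also have "\<dots> \<le> kH H (real n) v - kH H (real n - 1) v"
      using that i by (intro kH_diff_ge H) auto
    finally show ?thesis .
  qed
  moreover have "(\<lambda>v. kH H (real n) v - kH H (real n - 1) v) integrable_on {real i - 1..real i}"
    using i by (intro kH_diff_integrable H) auto
  ultimately have "integral {real i - 1..real i} (\<lambda>_. CH H * (real n - real i + 1) powr (H - 3/2))
      \<le> integral {real i - 1..real i} (\<lambda>v. kH H (real n) v - kH H (real n - 1) v)"
    by (intro integral_le) auto
  then show ?thesis
    unfolding Jn_1_eq_integral by simp
qed

lemma gn_1_le:
  assumes H: "1/2 < H" "H < 1" and n: "2 \<le> n"
  shows "gn 1 H 1 n \<le> 2 * CH H / (H - 1/2)"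
proof -
  have "kH H (real n) v \<le> 2 * CH H / (H - 1/2)" if v: "v \<in> {real n - 1..real n}" for v
  proof -
    have "v powr (1/2 - H) * real n powr (H - 1/2) = (real n / v) powr (H - 1/2)"
      using v n by (simp add: powr_divide powr_minus_divide[of v "H - 1/2", simplified])
    also have "\<dots> \<le> 2 powr 1"
      using v n H by (intro order.trans[OF powr_mono2 powr_mono]) (auto simp: field_simps)
    finally have "v powr (1/2 - H) * real n powr (H - 1/2) * (real n - v) powr (H - 1/2) \<le> 2 * 1"
      using v H by (intro mult_mono powr_le1) auto
    then have "CH H * (v powr (1/2 - H) * real n powr (H - 1/2) * (real n - v) powr (H - 1/2)) / (H - 1/2)
        \<le> 2 * CH H / (H - 1/2)"
      using H CH_pos[OF H] by (intro divide_right_mono) (auto simp: mult_left_mono)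
    moreover have "kH H (real n) v \<le> CH H * v powr (1/2 - H) * real n powr (H - 1/2) * (real n - v) powr (H - 1/2) / (H - 1/2)"
      using v n by (intro kH_le H) auto
    ultimately show ?thesis
      by (simp add: mult_ac)
  qed
  then have "integral {real n - 1..real n} (kH H (real n))
      \<le> integral {real n - 1..real n} (\<lambda>_. 2 * CH H / (H - 1/2))"
    by (intro integral_le_integrable_majorant kH_nonneg H) auto
  then show ?thesis
    unfolding gn_1_eq_integral by simp
qed

lemma Jn_1_tail_sum_unbounded:
  assumes H: "1/2 < H" "H < 1" and k: "2 \<le> k"
  shows "\<exists>d \<ge> k. T \<le> (\<Sum>i=k..k+d-1. Jn 1 H 1 (k + d) i)"
proof -
  have "eventually (\<lambda>d. T \<le> CH H * ((real d - 1) * (real d + 1) powr (H - 3/2))) sequentially"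
    using H CH_pos[OF H] by real_asymp
  moreover have "eventually (\<lambda>d. k \<le> d) sequentially"
    by (rule eventually_ge_at_top)
  ultimately have "eventually (\<lambda>d. k \<le> d \<and> T \<le> CH H * ((real d - 1) * (real d + 1) powr (H - 3/2))) sequentially"
    by (rule eventually_conj[rotated])
  then obtain d where d: "k \<le> d" and T: "T \<le> CH H * ((real d - 1) * (real d + 1) powr (H - 3/2))"
    unfolding eventually_sequentially by blast
  have "(real d - 1) * (real d + 1) powr (H - 3/2) \<le> (\<Sum>i=k..k+d-2. (real (k + d) - real i + 1) powr (H - 3/2))"
  proof -
    have "(real d + 1) powr (H - 3/2) \<le> (real (k + d) - real i + 1) powr (H - 3/2)" if "i \<in> {k..k+d-2}" for i
      using that d k H by (intro powr_mono2') auto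
    then have "real (card {k..k+d-2}) * (real d + 1) powr (H - 3/2)
        \<le> (\<Sum>i=k..k+d-2. (real (k + d) - real i + 1) powr (H - 3/2))"
      by (rule sum_bounded_below)
    moreover have "real (card {k..k+d-2}) = real d - 1"
      using d k by simp
    ultimately show ?thesis by simp
  qed
  then have "T \<le> (\<Sum>i=k..k+d-2. CH H * (real (k + d) - real i + 1) powr (H - 3/2))"
    using T CH_pos[OF H] by (simp add: sum_distrib_left[symmetric] mult_left_mono order_trans)
  also have "\<dots> \<le> (\<Sum>i=k..k+d-2. Jn 1 H 1 (k + d) i)"
    using d k by (intro sum_mono Jn_1_ge H) auto
  also have "\<dots> \<le> (\<Sum>i=k..k+d-1. Jn 1 H 1 (k + d) i)"
    using d k by (intro sum_mono2 Jn_1_nonneg H) auto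
  finally show ?thesis
    using d by auto
qed

lemma Yn_append_replicate:
  assumes "length x = k - 1" "1 \<le> k"
  shows "Yn \<sigma> H N (k + m) (x @ replicate m c) =
    (\<Sum>i=1..k-1. Jn \<sigma> H N (k + m) i * x ! (i - 1)) + c * (\<Sum>i=k..k+m-1. Jn \<sigma> H N (k + m) i)"
proof -
  have "{1..k+m-1} = {1..k-1} \<union> {k..k+m-1}"
    using assms by auto
  then have "Yn \<sigma> H N (k + m) (x @ replicate m c) =
      (\<Sum>i=1..k-1. Jn \<sigma> H N (k + m) i * (x @ replicate m c) ! (i - 1)) +
      (\<Sum>i=k..k+m-1. Jn \<sigma> H N (k + m) i * (x @ replicate m c) ! (i - 1))"
    unfolding Yn_def by (simp add: sum.union_disjoint)
  also have "\<dots> = (\<Sum>i=1..k-1. Jn \<sigma> H N (k + m) i * x ! (i - 1)) + (\<Sum>i=k..k+m-1. Jn \<sigma> H N (k + m) i * c)"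
    using assms by (intro arg_cong2[where f = "(+)"] sum.cong) (auto simp: nth_append)
  finally show ?thesis
    by (simp add: sum_distrib_left mult.commute)
qed

lemma append_replicate_mem_arb_level:
  assumes x: "x \<in> pm_seqs (k - 1)" and k: "1 \<le> k" and c: "c \<in> {-1, 1}"
    and margin: "(\<Sum>i=1..k-1. \<bar>Jn \<sigma> H N (k + m) i\<bar>) + gn \<sigma> H N (k + m) + \<bar>an a N (k + m)\<bar>
      \<le> (\<Sum>i=k..k+m-1. Jn \<sigma> H N (k + m) i)"
  shows "x @ replicate m c \<in> arb_level \<sigma> H a N (k + m)"
proof -
  have xl: "length x = k - 1" and xs: "set x \<subseteq> {-1, 1}"
    using x by (auto simp: pm_seqs_def)
  have "\<bar>\<Sum>i=1..k-1. Jn \<sigma> H N (k + m) i * x ! (i - 1)\<bar> \<le> (\<Sum>i=1..k-1. \<bar>Jn \<sigma> H N (k + m) i * x ! (i - 1)\<bar>)"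
    by (rule sum_abs)
  also have "\<dots> = (\<Sum>i=1..k-1. \<bar>Jn \<sigma> H N (k + m) i\<bar>)"
  proof (rule sum.cong)
    fix i assume "i \<in> {1..k-1}"
    then have "x ! (i - 1) \<in> set x"
      using xl by (intro nth_mem) auto
    then have "x ! (i - 1) \<in> {-1, 1}"
      using xs by blast
    then show "\<bar>Jn \<sigma> H N (k + m) i * x ! (i - 1)\<bar> = \<bar>Jn \<sigma> H N (k + m) i\<bar>"
      by (auto simp: abs_mult)
  qed simp
  finally have "\<bar>\<Sum>i=1..k-1. Jn \<sigma> H N (k + m) i * x ! (i - 1)\<bar> \<le> (\<Sum>i=1..k-1. \<bar>Jn \<sigma> H N (k + m) i\<bar>)" .
  moreover have "x @ replicate m c \<in> pm_seqs (k + m - 1)"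
    using xl xs c k by (auto simp: pm_seqs_def)
  ultimately show ?thesis
    using margin c k abs_ge_self[of "an a N (k + m)"] abs_ge_minus_self[of "an a N (k + m)"]
    by (auto simp: arb_level_def un_def dn_def Yn_append_replicate[OF xl k] abs_le_iff)
qed

lemma arbitrage_margin_of_unit_margin:
  assumes H: "1/2 < H" "H < 1" and \<sigma>: "\<sigma> > 0" and N: "N > 0" and kn: "1 \<le> k" "k < n"
    and unit_margin: "(\<Sum>i=1..k-1. Jn 1 H 1 n i) + gn 1 H 1 n + 1 \<le> (\<Sum>i=k..n-1. Jn 1 H 1 n i)"
    and an: "\<bar>an a N n\<bar> \<le> \<sigma> * real N powr (-H)"
  shows "(\<Sum>i=1..k-1. \<bar>Jn \<sigma> H N n i\<bar>) + gn \<sigma> H N n + \<bar>an a N n\<bar> \<le> (\<Sum>i=k..n-1. Jn \<sigma> H N n i)"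
proof -
  define q where "q = \<sigma> * real N powr (-H)"
  have q0: "q > 0"
    using N \<sigma> by (simp add: q_def)
  have "(\<Sum>i=1..k-1. \<bar>Jn \<sigma> H N n i\<bar>) = q * (\<Sum>i=1..k-1. Jn 1 H 1 n i)"
    unfolding sum_distrib_left
  proof (rule sum.cong)
    fix i assume i: "i \<in> {1..k-1}"
    then have "0 \<le> Jn 1 H 1 n i"
      using kn by (intro Jn_1_nonneg H) auto
    then show "\<bar>Jn \<sigma> H N n i\<bar> = q * Jn 1 H 1 n i"
      using i \<sigma> by (simp add: Jn_scale[OF N] abs_mult q_def)
  qed simp
  moreover have "gn \<sigma> H N n = q * gn 1 H 1 n"
    using gn_scale[OF N] kn by (simp add: q_def)
  moreover have "(\<Sum>i=k..n-1. Jn \<sigma> H N n i) = q * (\<Sum>i=k..n-1. Jn 1 H 1 n i)"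
    using kn by (simp add: sum_distrib_left Jn_scale[OF N] q_def)
  moreover have "q * ((\<Sum>i=1..k-1. Jn 1 H 1 n i) + gn 1 H 1 n + 1) \<le> q * (\<Sum>i=k..n-1. Jn 1 H 1 n i)"
    using unit_margin q0 by (intro mult_left_mono) auto
  ultimately show ?thesis
    using an by (simp add: q_def distrib_left)
qed

lemma eventually_constant_extensions_mem_arb_level:
  assumes H: "1/2 < H" "H < 1" and \<sigma>: "\<sigma> > 0" and a: "continuous_on {0..1} a"
    and k: "2 \<le> k" and x: "x \<in> pm_seqs (k - 1)"
  shows "\<exists>m \<ge> 1. eventually (\<lambda>N. \<forall>c \<in> {-1, 1}. x @ replicate m c \<in> arb_level \<sigma> H a N (k + m)) sequentially"
proof -
  have "bounded (a ` {0..1})"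
    using compact_imp_bounded[OF compact_continuous_image[OF a compact_Icc]] .
  then obtain M where M: "\<And>y. y \<in> {0..1} \<Longrightarrow> \<bar>a y\<bar> \<le> M"
    unfolding bounded_iff real_norm_def by blast
  obtain B where B: "\<And>n. 2 * k \<le> n \<Longrightarrow> (\<Sum>i=1..k-1. Jn 1 H 1 n i) \<le> B"
    using Jn_1_head_sum_bounded[OF H] by blast
  obtain m where m: "k \<le> m" and tail: "B + 2 * CH H / (H - 1/2) + 1 \<le> (\<Sum>i=k..k+m-1. Jn 1 H 1 (k + m) i)"
    using Jn_1_tail_sum_unbounded[OF H k] by blast
  define n where "n = k + m"
  have unit_margin: "(\<Sum>i=1..k-1. Jn 1 H 1 n i) + gn 1 H 1 n + 1 \<le> (\<Sum>i=k..n-1. Jn 1 H 1 n i)"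
    using B[of n] gn_1_le[OF H, of n] tail m k by (simp add: n_def)
  have "x @ replicate m c \<in> arb_level \<sigma> H a N n"
    if N: "n \<le> N" "M / real N \<le> \<sigma> * real N powr (-H)" and c: "c \<in> {-1, 1}" for N c
  proof -
    have N0: "N > 0"
      using N k by (simp add: n_def)
    have "\<bar>a (real n / real N)\<bar> \<le> M"
      using M N N0 by auto
    then have "\<bar>an a N n\<bar> \<le> M / real N"
      unfolding an_def by (simp add: divide_right_mono)
    then show ?thesis
      using append_replicate_mem_arb_level[OF x _ c]
        arbitrage_margin_of_unit_margin[OF H \<sigma> N0 _ _ unit_margin] N k m
      by (simp add: n_def)
  qed
  moreover have "eventually (\<lambda>N. n \<le> N \<and> M / real N \<le> \<sigma> * real N powr (-H)) sequentially"
    using H \<sigma> by (intro eventually_conj eventually_ge_at_top) real_asymp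
  ultimately show ?thesis
    using m k by (intro exI[of _ m]) (auto simp: n_def elim: eventually_mono)
qed

lemma replicate_append_Cons_eq_imp_eq:
  assumes "a \<noteq> b" "replicate m a @ b # xs = replicate n a @ b # ys"
  shows "m = n"
  using assms(2)
proof (induction m arbitrary: n)
  case 0
  then show ?case using assms(1) by (cases n) auto
next
  case (Suc m)
  then show ?case using assms(1) by (cases n) auto
qed

lemma finite_pm_seqs: "finite (pm_seqs m)"
proof -
  have "pm_seqs m = {xs. set xs \<subseteq> {-1, 1} \<and> length xs = m}"
    by (auto simp: pm_seqs_def)
  then show ?thesis
    by (simp add: finite_lists_length_eq)
qed

lemma finite_arb_set: "finite (arb_set \<sigma> H a N)"
  unfolding arb_set_def arb_level_def
  by (intro finite_UN_I) (auto intro: finite_subset[OF _ finite_pm_seqs])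

lemma filterlim_card_at_top_of_inj:
  fixes S :: "'b \<Rightarrow> 'a set" and p :: "nat \<Rightarrow> 'a"
  assumes "inj p" "\<And>N. finite (S N)" "\<And>j. eventually (\<lambda>N. p j \<in> S N) F"
  shows "filterlim (\<lambda>N. card (S N)) at_top F"
  unfolding filterlim_at_top
proof
  fix Z :: nat
  have "eventually (\<lambda>N. \<forall>j\<in>{..<Z}. p j \<in> S N) F"
    using assms(3) by (intro eventually_ball_finite) auto
  then show "eventually (\<lambda>N. Z \<le> card (S N)) F"
  proof (rule eventually_mono)
    fix N assume "\<forall>j\<in>{..<Z}. p j \<in> S N"
    then have "card (p ` {..<Z}) \<le> card (S N)"
      by (intro card_mono assms(2)) auto
    then show "Z \<le> card (S N)"
      using card_image[OF inj_on_subset[OF assms(1)]] by simp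
  qed
qed

lemma filterlim_card_arb_set:
  assumes "1/2 < H" "H < 1" "\<sigma> > 0" "continuous_on {0..1} a"
  shows "filterlim (\<lambda>N. card (arb_set \<sigma> H a N)) at_top sequentially"
proof -
  have "\<exists>y. (\<exists>ys. y = replicate j 1 @ (-1) # ys) \<and> eventually (\<lambda>N. y \<in> arb_set \<sigma> H a N) sequentially" for j
  proof -
    have "\<exists>m \<ge> 1. eventually (\<lambda>N. \<forall>c\<in>{-1, 1}.
        (replicate j 1 @ [-1]) @ replicate m c \<in> arb_level \<sigma> H a N (j + 2 + m)) sequentially"
      by (rule eventually_constant_extensions_mem_arb_level[OF assms]) (auto simp: pm_seqs_def)
    then obtain m where "eventually (\<lambda>N. \<forall>c\<in>{-1, 1}.
        (replicate j 1 @ [-1]) @ replicate m c \<in> arb_level \<sigma> H a N (j + 2 + m)) sequentially"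
      by blast
    then have "eventually (\<lambda>N. replicate j 1 @ (-1) # replicate m 1 \<in> arb_set \<sigma> H a N) sequentially"
      using eventually_ge_at_top[of "j + 2 + m"] by eventually_elim (auto simp: arb_set_def)
    then show ?thesis
      by blast
  qed
  then have "\<forall>j. \<exists>y. (\<exists>ys. y = replicate j 1 @ (-1) # ys) \<and> eventually (\<lambda>N. y \<in> arb_set \<sigma> H a N) sequentially"
    by blast
  then obtain p where p: "\<forall>j. (\<exists>ys. p j = replicate j 1 @ (-1) # ys) \<and> eventually (\<lambda>N. p j \<in> arb_set \<sigma> H a N) sequentially"
    by metis
  have "inj p"
  proof (rule injI)
    fix j j' assume eq: "p j = p j'"
    obtain ys ys' where "p j = replicate j 1 @ (-1) # ys" "p j' = replicate j' 1 @ (-1) # ys'"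
      using p by blast
    then have "replicate j (1 :: real) @ (-1) # ys = replicate j' 1 @ (-1) # ys'"
      using eq by simp
    then show "j = j'"
      by (rule replicate_append_Cons_eq_imp_eq[rotated]) simp
  qed
  then show ?thesis
    by (rule filterlim_card_at_top_of_inj[OF _ finite_arb_set]) (use p in blast)
qed

theorem proposition3p2:
  fixes H \<sigma> :: real and a :: "real \<Rightarrow> real"
  assumes "1/2 < H" and "H < 1" and "\<sigma> > 0" and "continuous_on {0..1} a"
  shows "(\<forall>k::nat. \<forall>x. k \<ge> 2 \<longrightarrow> x \<in> pm_seqs (k - 1) \<longrightarrow>
           (\<exists>nk Nk::nat. nk \<ge> 1 \<and> Nk \<ge> k + nk \<and>
              (\<forall>N \<ge> Nk. x @ replicate nk 1 \<in> arb_level \<sigma> H a N (k + nk) \<and>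
                         x @ replicate nk (-1) \<in> arb_level \<sigma> H a N (k + nk))))
       \<and> filterlim (\<lambda>N. card (arb_set \<sigma> H a N)) at_top sequentially"
proof (intro conjI allI impI)
  fix k :: nat and x assume "k \<ge> 2" "x \<in> pm_seqs (k - 1)"
  then obtain m where "m \<ge> 1" and
      "eventually (\<lambda>N. \<forall>c\<in>{-1, 1}. x @ replicate m c \<in> arb_level \<sigma> H a N (k + m)) sequentially"
    using eventually_constant_extensions_mem_arb_level[OF assms] by blast
  moreover from this(2) obtain N0 where
      "\<forall>N \<ge> N0. \<forall>c\<in>{-1, 1}. x @ replicate m c \<in> arb_level \<sigma> H a N (k + m)"
    unfolding eventually_sequentially by blast
  ultimately show "\<exists>nk Nk::nat. nk \<ge> 1 \<and> Nk \<ge> k + nk \<and>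
      (\<forall>N \<ge> Nk. x @ replicate nk 1 \<in> arb_level \<sigma> H a N (k + nk) \<and>
                 x @ replicate nk (-1) \<in> arb_level \<sigma> H a N (k + nk))"
    by (intro exI[of _ m] exI[of _ "max N0 (k + m)"]) auto
next
  show "filterlim (\<lambda>N. card (arb_set \<sigma> H a N)) at_top sequentially"
    using filterlim_card_arb_set[OF assms] .
qed

end
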